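(* Fix $\alpha\in(0,\tfrac12)$ and run Algorithm 2 (described in the context) with parameter $\alpha$ on any instance of dynamic bin packing. Then at every time $t$, the algorithm has at most $\frac{1}{\alpha}\mathrm{OPT}_t+O(\log\rho)$ bins open, where $\rho$ is the maximum number of items simultaneously present in the system and the $O(\cdot)$ hides an absolute constant.
   Context: Dynamic bin packing: bins have capacity $1$; items arrive online at times $a_i\ge0$ with size $s_i\in[0,1]$ and (unknown at arrival) duration $d_i>0$, and depart at $a_i+d_i$. The load of a bin is the total size of its items; a bin is open while nonempty. $\mathrm{OPT}_t$ is the minimum number of unit bins needed to pack the items present at time $t$. FirstFit with a given ordering of bins places an item into the first bin in the order with enough remaining capacity, or opens a new bin. Algorithm 1 (parameters $\alpha, f$): each bin is labeled Bad or Good. When an item $i$ of size $s_i$ arrives: if there is a Bad bin with load $\le 1-s_i$, put $i$ there, and if its load becomes $\ge f$ relabel it Good; otherwise, if there is a Good bin with load $\le1-s_i$, put $i$ into any such bin; otherwise open a new bin for $i$, labeled Bad if its load is $<f$ and Good otherwise. When an item departs: if its bin was Good and now has load $<\alpha$, migrate all items remaining in that bin using FirstFit with bins ordered Bad bins, then Good bins, then new bins. Algorithm 2 (parameter $\alpha$): an item has class $c\in\{0,1,2,\dots\}$ if its size lies in $(2^{-(c+1)},2^{-c}]$. Initialize a guess $\tilde\rho=1$, an instance of Algorithm 1 for class $0$ with parameters $(\alpha,\tfrac12)$, and one junk bin. For each arriving item: if the current number of items in the system is $\ge\tilde\rho$, double $\tilde\rho$, initialize a new instance of Algorithm 1 for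 class $c=\log_2\tilde\rho$ with parameters $(\alpha,1-2^{-c})$, and open a new junk bin for this guess. Then, if the item's class $c$ satisfies $c<\log_2\tilde\rho$, assign it using the Algorithm 1 instance for class $c$ (each instance uses its own bins); otherwise assign it to the junk bin of the current guess $\tilde\rho$. *)

theory Defs
  imports Complex_Main
begin

definition valid_instance :: "nat \<Rightarrow> (nat \<Rightarrow> real) \<Rightarrow> (nat \<Rightarrow> real) \<Rightarrow> (nat \<Rightarrow> real) \<Rightarrow> bool" where
  "valid_instance n arr sz dur \<longleftrightarrow>
     (\<forall>i<n. 0 \<le> arr i \<and> 0 \<le> sz i \<and> sz i \<le> 1 \<and> 0 < dur i)"

definition present :: "nat \<Rightarrow> (nat \<Rightarrow> real) \<Rightarrow> (nat \<Rightarrow> real) \<Rightarrow> real \<Rightarrow> nat set" where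
  "present n arr dur t = {i. i < n \<and> arr i \<le> t \<and> t < arr i + dur i}"

definition OPT :: "(nat \<Rightarrow> real) \<Rightarrow> nat set \<Rightarrow> nat" where
  "OPT sz S = (LEAST k. \<exists>asg :: nat \<Rightarrow> nat. (\<forall>i\<in>S. asg i < k) \<and>
                          (\<forall>b<k. (\<Sum>i\<in>{i\<in>S. asg i = b}. sz i) \<le> 1))"

definition rho :: "nat \<Rightarrow> (nat \<Rightarrow> real) \<Rightarrow> (nat \<Rightarrow> real) \<Rightarrow> nat" where
  "rho n arr dur = Max ((\<lambda>t. card (present n arr dur t)) ` UNIV)"

datatype event = Arr nat | Dep nat

fun etime :: "(nat \<Rightarrow> real) \<Rightarrow> (nat \<Rightarrow> real) \<Rightarrow> event \<Rightarrow> real" where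
  "etime arr dur (Arr i) = arr i"
| "etime arr dur (Dep i) = arr i + dur i"

fun is_dep :: "event \<Rightarrow> bool" where
  "is_dep (Arr i) = False"
| "is_dep (Dep i) = True"

text \<open>The order in which the online algorithm processes the events: every arrival and departure
  exactly once, in nondecreasing order of time; at equal times departures are processed before
  arrivals (items are present on the half-open interval [a_i, a_i + d_i)). Ties among events of
  the same kind at the same time are broken arbitrarily.\<close>
definition valid_events :: "nat \<Rightarrow> (nat \<Rightarrow> real) \<Rightarrow> (nat \<Rightarrow> real) \<Rightarrow> event list \<Rightarrow> bool" where
  "valid_events n arr dur es \<longleftrightarrow>
     distinct es \<and> set es = {Arr i | i. i < n} \<union> {Dep i | i. i < n} \<and>
     sorted_wrt (\<lambda>e1 e2. etime arr dur e1 < etime arr dur e2 \<or>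
                          (etime arr dur e1 = etime arr dur e2 \<and> (is_dep e1 \<or> \<not> is_dep e2))) es"

text \<open>Locations of items: the junk bin of guess 2^k, or a bin (with identifier b) of one
  of the Algorithm 1 instances.\<close>
datatype loc = Junk nat | Bin nat

record state =
  pos  :: "nat \<Rightarrow> loc option"   \<comment> \<open>current bin of each item present in the system\<close>
  cls  :: "nat \<Rightarrow> nat"          \<comment> \<open>the class (= Algorithm 1 instance) owning bin b\<close>
  good :: "nat \<Rightarrow> bool"         \<comment> \<open>label of bin b: True = Good, False = Bad\<close>
  gk   :: nat                   \<comment> \<open>current guess is 2 ^ gk\<close>

definition init_state :: state where
  "init_state = \<lparr>pos = (\<lambda>_. None), cls = (\<lambda>_. 0), good = (\<lambda>_. False), gk = 0\<rparr>"

definition load :: "(nat \<Rightarrow> real) \<Rightarrow> (nat \<Rightarrow> loc option) \<Rightarrow> loc \<Rightarrow> real" where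
  "load sz p l = (\<Sum>j\<in>{j. p j = Some l}. sz j)"

definition is_open :: "(nat \<Rightarrow> loc option) \<Rightarrow> nat \<Rightarrow> bool" where
  "is_open p b \<longleftrightarrow> (\<exists>j. p j = Some (Bin b))"

definition num_open :: "state \<Rightarrow> nat" where
  "num_open \<sigma> = card (ran (pos \<sigma>))"

definition num_items :: "state \<Rightarrow> nat" where
  "num_items \<sigma> = card {j. pos \<sigma> j \<noteq> None}"

definition item_class :: "real \<Rightarrow> nat" where
  "item_class x = (THE c. (1/2::real) ^ Suc c < x \<and> x \<le> (1/2) ^ c)"

text \<open>Threshold parameter f of the Algorithm 1 instance for class c.\<close>
definition fpar :: "nat \<Rightarrow> real" where
  "fpar c = (if c = 0 then 1/2 else 1 - (1/2) ^ c)"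

fun first_fit :: "(nat \<Rightarrow> real) \<Rightarrow> nat list \<Rightarrow> nat list \<Rightarrow> (nat \<Rightarrow> real) \<Rightarrow> nat list
                   \<Rightarrow> (nat \<times> nat) list" where
  "first_fit sz ord fr ld [] = []"
| "first_fit sz ord fr ld (x # xs) =
     (case find (\<lambda>b. ld b + sz x \<le> 1) ord of
        Some b \<Rightarrow> (x, b) # first_fit sz ord fr (ld(b := ld b + sz x)) xs
      | None \<Rightarrow> (case fr of
                   [] \<Rightarrow> []
                 | b # fr' \<Rightarrow> (x, b) # first_fit sz (ord @ [b]) fr' (ld(b := sz x)) xs))"

definition migrate_result ::
  "(nat \<Rightarrow> real) \<Rightarrow> real \<Rightarrow> nat \<Rightarrow> nat list \<Rightarrow> (nat \<times> nat) list \<Rightarrow> state \<Rightarrow> state" where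
  "migrate_result sz f c ord A \<sigma> =
     (let p' = (\<lambda>j. case map_of A j of Some b \<Rightarrow> Some (Bin b) | None \<Rightarrow> pos \<sigma> j);
          newb = set (map snd A) - set ord
      in \<sigma>\<lparr>pos := p',
           cls := (\<lambda>b. if b \<in> newb then c else cls \<sigma> b),
           good := (\<lambda>b. if b \<in> newb then f \<le> load sz p' (Bin b)
                        else if b \<in> set ord then good \<sigma> b \<or> f \<le> load sz p' (Bin b)
                        else good \<sigma> b)\<rparr>)"

definition new_guess :: "state \<Rightarrow> nat" where
  "new_guess \<sigma> = (if num_items \<sigma> \<ge> 2 ^ gk \<sigma> then Suc (gk \<sigma>) else gk \<sigma>)"

definition bad_cand :: "(nat \<Rightarrow> real) \<Rightarrow> state \<Rightarrow> nat \<Rightarrow> real \<Rightarrow> nat \<Rightarrow> bool" where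
  "bad_cand sz \<sigma> c x b \<longleftrightarrow> is_open (pos \<sigma>) b \<and> cls \<sigma> b = c \<and> \<not> good \<sigma> b \<and>
                            load sz (pos \<sigma>) (Bin b) \<le> 1 - x"

definition good_cand :: "(nat \<Rightarrow> real) \<Rightarrow> state \<Rightarrow> nat \<Rightarrow> real \<Rightarrow> nat \<Rightarrow> bool" where
  "good_cand sz \<sigma> c x b \<longleftrightarrow> is_open (pos \<sigma>) b \<and> cls \<sigma> b = c \<and> good \<sigma> b \<and>
                             load sz (pos \<sigma>) (Bin b) \<le> 1 - x"

text \<open>All choices left open by
  the algorithm (which Bad/Good bin, bin identifiers, the order of bins within the Bad and
  the Good group and of the migrated items in FirstFit) are nondeterministic.\<close>
inductive step :: "real \<Rightarrow> (nat \<Rightarrow> real) \<Rightarrow> state \<Rightarrow> event \<Rightarrow> state \<Rightarrow> bool" where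
  arr_junk:
  "\<lbrakk> k = new_guess \<sigma>; \<not> (0 < sz i \<and> item_class (sz i) < k) \<rbrakk> \<Longrightarrow>
     step \<alpha> sz \<sigma> (Arr i) (\<sigma>\<lparr>gk := k, pos := (pos \<sigma>)(i := Some (Junk k))\<rparr>)"
| arr_bad:
  "\<lbrakk> k = new_guess \<sigma>; 0 < sz i; c = item_class (sz i); c < k; bad_cand sz \<sigma> c (sz i) b \<rbrakk> \<Longrightarrow>
     step \<alpha> sz \<sigma> (Arr i)
       (\<sigma>\<lparr>gk := k, pos := (pos \<sigma>)(i := Some (Bin b)),
          good := (good \<sigma>)(b := fpar c \<le> load sz (pos \<sigma>) (Bin b) + sz i)\<rparr>)"
| arr_good:
  "\<lbrakk> k = new_guess \<sigma>; 0 < sz i; c = item_class (sz i); c < k;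
     \<forall>b'. \<not> bad_cand sz \<sigma> c (sz i) b'; good_cand sz \<sigma> c (sz i) b \<rbrakk> \<Longrightarrow>
     step \<alpha> sz \<sigma> (Arr i) (\<sigma>\<lparr>gk := k, pos := (pos \<sigma>)(i := Some (Bin b))\<rparr>)"
| arr_new:
  "\<lbrakk> k = new_guess \<sigma>; 0 < sz i; c = item_class (sz i); c < k;
     \<forall>b'. \<not> bad_cand sz \<sigma> c (sz i) b'; \<forall>b'. \<not> good_cand sz \<sigma> c (sz i) b';
     \<not> is_open (pos \<sigma>) b \<rbrakk> \<Longrightarrow>
     step \<alpha> sz \<sigma> (Arr i)
       (\<sigma>\<lparr>gk := k, pos := (pos \<sigma>)(i := Some (Bin b)), cls := (cls \<sigma>)(b := c),
          good := (good \<sigma>)(b := fpar c \<le> sz i)\<rparr>)"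
| dep_plain:
  "\<lbrakk> pos \<sigma> i = Some l; p' = (pos \<sigma>)(i := None);
     \<not> (\<exists>b. l = Bin b \<and> good \<sigma> b \<and> load sz p' l < \<alpha>) \<rbrakk> \<Longrightarrow>
     step \<alpha> sz \<sigma> (Dep i) (\<sigma>\<lparr>pos := p'\<rparr>)"
| dep_migrate:
  "\<lbrakk> pos \<sigma> i = Some (Bin b); p' = (pos \<sigma>)(i := None); good \<sigma> b; load sz p' (Bin b) < \<alpha>;
     c = cls \<sigma> b;
     distinct M; set M = {j. p' j = Some (Bin b)};
     distinct badl; set badl = {b'. is_open p' b' \<and> cls \<sigma> b' = c \<and> \<not> good \<sigma> b'};
     distinct goodl; set goodl = {b'. is_open p' b' \<and> cls \<sigma> b' = c \<and> good \<sigma> b' \<and> b' \<noteq> b};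
     distinct fr; length M \<le> length fr; \<forall>b'\<in>set fr. \<not> is_open p' b' \<and> b' \<noteq> b;
     A = first_fit sz (badl @ goodl) fr (\<lambda>b'. load sz p' (Bin b')) M \<rbrakk> \<Longrightarrow>
     step \<alpha> sz \<sigma> (Dep i) (migrate_result sz (fpar c) c (badl @ goodl) A (\<sigma>\<lparr>pos := p'\<rparr>))"

definition is_run :: "real \<Rightarrow> (nat \<Rightarrow> real) \<Rightarrow> event list \<Rightarrow> state list \<Rightarrow> bool" where
  "is_run \<alpha> sz es ss \<longleftrightarrow> length ss = Suc (length es) \<and> ss ! 0 = init_state \<and>
     (\<forall>p<length es. step \<alpha> sz (ss ! p) (es ! p) (ss ! Suc p))"

definition state_at :: "(nat \<Rightarrow> real) \<Rightarrow> (nat \<Rightarrow> real) \<Rightarrow> event list \<Rightarrow> state list \<Rightarrow> real \<Rightarrow> state" where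
  "state_at arr dur es ss t = ss ! length (filter (\<lambda>e. etime arr dur e \<le> t) es)"

end

theory Submission
  imports Defs
begin

text \<open>Every open bin is a junk bin, a Bad bin or a Good bin. There is one junk bin per guess,
  and the guess \<open>2 ^ k\<close> is only doubled when \<open>2 ^ k\<close> items are present, so \<open>k \<le> 1 + log \<rho>\<close>.
  Good bins are filled to at least \<open>\<alpha>\<close> (a Good bin dropping below \<open>\<alpha>\<close> is emptied by
  migration), so there are at most \<open>OPT/\<alpha>\<close> of them, \<open>OPT\<close> being at least the total
  size of the items. Finally each of the \<open>k\<close> instances of Algorithm 1 has at most one Bad
  bin: an item of class \<open>c\<close> is either at least the threshold \<open>f\<close> of its class or at most
  \<open>1 - f\<close>, and a small item only opens a new bin if no Bad bin can take it; FirstFit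
  preserves this during migrations.\<close>

definition size_in_class :: "nat \<Rightarrow> real \<Rightarrow> bool" where
  "size_in_class c x \<longleftrightarrow> (1/2) ^ Suc c < x \<and> x \<le> (1/2) ^ c"

lemma size_in_class_pos:
  assumes "size_in_class c x"
  shows "0 < x"
proof -
  have "0 < (1/2::real) ^ Suc c" by simp
  then show ?thesis using assms unfolding size_in_class_def by linarith
qed

lemma size_in_class_unique:
  assumes "size_in_class c x" "size_in_class d x"
  shows "c = d"
proof (rule ccontr)
  have anti: False if "size_in_class c x" "size_in_class d x" "c < d" for c d
  proof -
    have "(1/2::real) ^ d \<le> (1/2) ^ Suc c"
      using \<open>c < d\<close> by (intro power_decreasing) auto
    then show False using that unfolding size_in_class_def by linarith
  qed
  assume "c \<noteq> d"
  then consider "c < d" | "d < c" by linarith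
  then show False using anti assms by cases blast+
qed

lemma size_in_class_exists:
  assumes "0 < x" "x \<le> (1::real)"
  shows "\<exists>c. size_in_class c x"
proof -
  obtain m where m: "(1/2::real) ^ m < x" using real_arch_pow_inv[of x "1/2"] assms by auto
  have "(1/2::real) ^ Suc m \<le> (1/2) ^ m" by (rule power_decreasing) auto
  then have "(1/2::real) ^ Suc m < x" using m by linarith
  then have ex: "\<exists>k. (1/2::real) ^ Suc k < x" ..
  define c where "c = (LEAST k. (1/2::real) ^ Suc k < x)"
  have "(1/2::real) ^ Suc c < x" unfolding c_def using ex by (rule LeastI_ex)
  moreover have "x \<le> (1/2) ^ c"
  proof (cases c)
    case (Suc d)
    then have "\<not> (1/2::real) ^ Suc d < x"
      using not_less_Least[of d "\<lambda>k. (1/2::real) ^ Suc k < x"] unfolding c_def[symmetric] by auto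
    then show ?thesis using Suc by simp
  qed (use assms in simp)
  ultimately show ?thesis unfolding size_in_class_def by blast
qed

lemma size_in_class_item_class:
  assumes "0 < x" "x \<le> 1"
  shows "size_in_class (item_class x) x"
proof -
  obtain c where c: "size_in_class c x" using size_in_class_exists assms by blast
  have "item_class x = c" unfolding item_class_def size_in_class_def[symmetric]
    by (rule the_equality) (use c size_in_class_unique in auto)
  then show ?thesis using c by simp
qed

lemma fpar_ge_half: "1/2 \<le> fpar c"
proof (cases c)
  case (Suc d)
  have "(1/2::real) ^ Suc d \<le> 1/2" by (simp add: power_le_one)
  then show ?thesis using Suc by (simp add: fpar_def)
qed (simp add: fpar_def)

text \<open>This dichotomy is what keeps the number of Bad bins of each class at most one.\<close>
lemma size_in_class_fpar: "size_in_class c x \<Longrightarrow> fpar c \<le> x \<or> x \<le> 1 - fpar c"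
  by (auto simp: fpar_def size_in_class_def)

lemma load_closed: "\<not> is_open p b \<Longrightarrow> load sz p (Bin b) = 0"
  unfolding load_def is_open_def by simp

lemma load_fun_upd_Some:
  assumes "p i = None" "finite (dom p)"
  shows "load sz (p(i := Some l)) l' = load sz p l' + (if l' = l then sz i else 0)"
proof -
  have fin: "finite {j. p j = Some l'}"
    by (rule finite_subset[OF _ assms(2)]) auto
  show ?thesis
  proof (cases "l' = l")
    case True
    then have "{j. (p(i := Some l)) j = Some l'} = insert i {j. p j = Some l'}" by auto
    then show ?thesis using True fin assms(1) unfolding load_def by simp
  next
    case False
    then have "{j. (p(i := Some l)) j = Some l'} = {j. p j = Some l'}" using assms(1) by auto
    then show ?thesis using False unfolding load_def by simp
  qed
qed

lemma load_fun_upd_None: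
  assumes "p i = Some l" "finite (dom p)"
  shows "load sz (p(i := None)) l' = load sz p l' - (if l' = l then sz i else 0)"
proof -
  have fin: "finite {j. p j = Some l'}"
    by (rule finite_subset[OF _ assms(2)]) auto
  show ?thesis
  proof (cases "l' = l")
    case True
    then have "{j. (p(i := None)) j = Some l'} = {j. p j = Some l'} - {i}" by auto
    then show ?thesis using True fin assms(1) unfolding load_def by (simp add: sum_diff1)
  next
    case False
    then have "{j. (p(i := None)) j = Some l'} = {j. p j = Some l'}" using assms by auto
    then show ?thesis using False unfolding load_def by simp
  qed
qed

lemma is_open_fun_upd_Some:
  assumes "p i = None"
  shows "is_open (p(i := Some l)) b \<longleftrightarrow> is_open p b \<or> l = Bin b"
  using assms unfolding is_open_def by (auto split: if_splits) (metis option.distinct(1))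

lemma is_open_fun_upd_None: "is_open (p(i := None)) b \<Longrightarrow> is_open p b"
  unfolding is_open_def by (metis fun_upd_apply option.distinct(1))

section \<open>FirstFit\<close>

lemma map_fst_first_fit:
  "length xs \<le> length fr \<Longrightarrow> map fst (first_fit sz ord fr ld xs) = xs"
proof (induction xs arbitrary: ord fr ld)
  case (Cons x xs)
  then show ?case by (cases "find (\<lambda>b. ld b + sz x \<le> 1) ord"; cases fr) auto
qed simp

lemma first_fit_targets:
  "(x, b) \<in> set (first_fit sz ord fr ld xs) \<Longrightarrow> b \<in> set ord \<union> set fr"
proof (induction xs arbitrary: ord fr ld)
  case (Cons y xs)
  show ?case
  proof (cases "find (\<lambda>b. ld b + sz y \<le> 1) ord")
    case None
    then show ?thesis using Cons by (cases fr) fastforce+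
  next
    case (Some b')
    then have "b' \<in> set ord" by (metis find_Some_iff nth_mem)
    then show ?thesis using Some Cons by auto
  qed
qed simp

definition assigned_size :: "(nat \<Rightarrow> real) \<Rightarrow> (nat \<times> nat) list \<Rightarrow> nat \<Rightarrow> real" where
  "assigned_size sz A b = sum_list (map (sz \<circ> fst) (filter (\<lambda>p. snd p = b) A))"

lemma assigned_size_Nil [simp]: "assigned_size sz [] b = 0"
  by (simp add: assigned_size_def)

lemma assigned_size_Cons [simp]:
  "assigned_size sz ((x, b') # A) b = (if b' = b then sz x else 0) + assigned_size sz A b"
  by (simp add: assigned_size_def)

lemma assigned_size_eq_sum:
  assumes "distinct (map fst A)"
  shows "assigned_size sz A b = sum sz {j. (j, b) \<in> set A}"
proof -
  have "assigned_size sz A b = sum_list (map sz (map fst (filter (\<lambda>p. snd p = b) A)))"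
    by (simp add: assigned_size_def)
  also have "\<dots> = sum sz (set (map fst (filter (\<lambda>p. snd p = b) A)))"
    by (rule sum_list_distinct_conv_sum_set[OF distinct_map_filter[OF assms]])
  also have "set (map fst (filter (\<lambda>p. snd p = b) A)) = {j. (j, b) \<in> set A}"
    by force
  finally show ?thesis .
qed

lemma assigned_size_nonneg: "\<forall>x\<in>set (map fst A). 0 \<le> sz x \<Longrightarrow> 0 \<le> assigned_size sz A b"
  by (induction A) auto

lemma assigned_size_not_target: "b \<notin> set (map snd A) \<Longrightarrow> assigned_size sz A b = 0"
  by (induction A) auto

text \<open>In the application \<open>Q\<close> consists of the Bad bins of \<open>ord\<close>; the Good bins there may
  well stay below \<open>f\<close>, which is why only \<open>Q\<close> and the newly opened bins are counted.\<close>
definition underfull ::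
  "(nat \<Rightarrow> real) \<Rightarrow> real \<Rightarrow> nat set \<Rightarrow> nat list \<Rightarrow> (nat \<Rightarrow> real) \<Rightarrow> (nat \<times> nat) list \<Rightarrow> nat set" where
  "underfull sz f Q ord ld A = {b \<in> Q \<union> (set (map snd A) - set ord). ld b + assigned_size sz A b < f}"

lemma underfull_Nil: "underfull sz f Q ord ld [] = {b \<in> Q. ld b < f}"
  by (auto simp: underfull_def)

lemma underfull_Cons_old:
  "b0 \<in> set ord \<Longrightarrow>
    underfull sz f Q ord ld ((x, b0) # A) = underfull sz f Q ord (ld(b0 := ld b0 + sz x)) A"
  by (auto simp: underfull_def add.assoc)

lemma underfull_Cons_new:
  "b0 \<notin> set ord \<Longrightarrow> ld b0 = 0 \<Longrightarrow>
    underfull sz f Q ord ld ((x, b0) # A) = underfull sz f (insert b0 Q) (ord @ [b0]) (ld(b0 := sz x)) A"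
  by (auto simp: underfull_def)

text \<open>A small item \<open>x\<close> opens a new bin only if it fits in no bin of \<open>Q\<close>, so all of
  them are then filled above \<open>1 - x \<ge> f\<close>; a large item fills its new bin to \<open>f\<close>.\<close>
lemma open_bin_underfull_card_le_1:
  fixes x f :: real
  assumes nofit: "\<forall>b\<in>Q. \<not> ld b + x \<le> 1" and x: "x \<le> 1 - f \<or> f \<le> x"
    and Q: "finite Q" "card {b\<in>Q. ld b < f} \<le> 1" and b0: "b0 \<notin> Q"
  shows "card {b \<in> insert b0 Q. (ld(b0 := x)) b < f} \<le> 1"
proof (cases "x \<le> 1 - f")
  case True
  have "b = b0" if "b \<in> insert b0 Q" "(ld(b0 := x)) b < f" for b
  proof (rule ccontr)
    assume "b \<noteq> b0"
    then have "b \<in> Q" "ld b < f" using that by auto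
    moreover have "\<not> ld b + x \<le> 1" using nofit \<open>b \<in> Q\<close> by blast
    ultimately show False using True by linarith
  qed
  then have "{b \<in> insert b0 Q. (ld(b0 := x)) b < f} \<subseteq> {b0}" by blast
  then show ?thesis using card_mono[of "{b0}"] by fastforce
next
  case False
  then have "{b \<in> insert b0 Q. (ld(b0 := x)) b < f} = {b\<in>Q. ld b < f}"
    using x b0 by auto
  then show ?thesis using Q by simp
qed

lemma card_underfull_first_fit_le_1:
  assumes "Q \<subseteq> set ord" "card {b\<in>Q. ld b < f} \<le> 1"
    and "\<forall>b\<in>set fr. ld b = 0" "set fr \<inter> set ord = {}" "distinct fr"
    and "\<forall>x\<in>set xs. 0 \<le> sz x \<and> (sz x \<le> 1 - f \<or> f \<le> sz x)"
  shows "card (underfull sz f Q ord ld (first_fit sz ord fr ld xs)) \<le> 1"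
  using assms
proof (induction xs arbitrary: Q ord fr ld)
  case Nil
  then show ?case by (simp add: underfull_Nil)
next
  case (Cons x xs)
  note prems = Cons.prems and IH = Cons.IH
  have Q: "finite Q" using prems(1) finite_subset by blast
  have x: "0 \<le> sz x" "sz x \<le> 1 - f \<or> f \<le> sz x" and xs: "\<forall>y\<in>set xs. 0 \<le> sz y \<and> (sz y \<le> 1 - f \<or> f \<le> sz y)"
    using prems(6) by auto
  show ?case
  proof (cases "find (\<lambda>b. ld b + sz x \<le> 1) ord")
    case (Some b0)
    have b0: "b0 \<in> set ord" using Some by (metis find_Some_iff nth_mem)
    let ?ld = "ld(b0 := ld b0 + sz x)"
    have "card {b\<in>Q. ?ld b < f} \<le> card {b\<in>Q. ld b < f}"
      by (rule card_mono) (use Q x in auto)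
    then have "card {b\<in>Q. ?ld b < f} \<le> 1" using prems(2) by linarith
    moreover have "\<forall>b\<in>set fr. ?ld b = 0" using prems(3,4) b0 by auto
    ultimately have "card (underfull sz f Q ord ?ld (first_fit sz ord fr ?ld xs)) \<le> 1"
      using prems(1,4,5) xs by (intro IH)
    then show ?thesis using Some b0 by (simp add: underfull_Cons_old)
  next
    case None
    then have nofit: "\<forall>b\<in>Q. \<not> ld b + sz x \<le> 1"
      using prems(1) by (auto simp: find_None_iff)
    show ?thesis
    proof (cases fr)
      case Nil
      then show ?thesis using None prems(2) by (simp add: underfull_Nil)
    next
      case (Cons b0 fr')
      have b0: "b0 \<notin> set ord" "ld b0 = 0" "b0 \<notin> Q"
        using Cons prems(1,3,4) by auto
      let ?ld = "ld(b0 := sz x)"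
      have "card {b \<in> insert b0 Q. ?ld b < f} \<le> 1"
        using open_bin_underfull_card_le_1[OF nofit x(2) Q prems(2) b0(3)] .
      moreover have "insert b0 Q \<subseteq> set (ord @ [b0])" "\<forall>b\<in>set fr'. ?ld b = 0"
        "set fr' \<inter> set (ord @ [b0]) = {}" "distinct fr'"
        using Cons prems(1,3,4,5) by auto
      ultimately have "card (underfull sz f (insert b0 Q) (ord @ [b0]) ?ld
          (first_fit sz (ord @ [b0]) fr' ?ld xs)) \<le> 1"
        using xs by (intro IH)
      then show ?thesis using None Cons b0 by (simp add: underfull_Cons_new)
    qed
  qed
qed

section \<open>The invariant\<close>

definition packing_inv ::
  "real \<Rightarrow> (nat \<Rightarrow> real) \<Rightarrow> nat \<Rightarrow> (nat \<Rightarrow> loc option) \<Rightarrow> (nat \<Rightarrow> nat) \<Rightarrow> (nat \<Rightarrow> bool) \<Rightarrow> nat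
    \<Rightarrow> bool" where
  "packing_inv \<alpha> sz n p cl gd g \<longleftrightarrow>
     dom p \<subseteq> {..<n} \<and>
     (\<forall>j k. p j = Some (Junk k) \<longrightarrow> k \<le> g) \<and>
     (\<forall>b. is_open p b \<longrightarrow> cl b < g) \<and>
     (\<forall>b. is_open p b \<and> gd b \<longrightarrow> \<alpha> \<le> load sz p (Bin b)) \<and>
     (\<forall>b. is_open p b \<and> \<not> gd b \<longrightarrow> load sz p (Bin b) < fpar (cl b)) \<and>
     (\<forall>j b. p j = Some (Bin b) \<longrightarrow> size_in_class (cl b) (sz j)) \<and>
     inj_on cl {b. is_open p b \<and> \<not> gd b}"

lemma packing_inv_finite_dom: "packing_inv \<alpha> sz n p cl gd g \<Longrightarrow> finite (dom p)"
  unfolding packing_inv_def using finite_subset by blast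

lemma packing_inv_mono_guess:
  "packing_inv \<alpha> sz n p cl gd g \<Longrightarrow> g \<le> k \<Longrightarrow> packing_inv \<alpha> sz n p cl gd k"
  unfolding packing_inv_def by (meson le_trans less_le_trans)

lemma packing_inv_arrive_junk:
  assumes inv: "packing_inv \<alpha> sz n p cl gd k" and i: "i < n" "p i = None"
  shows "packing_inv \<alpha> sz n (p(i := Some (Junk k))) cl gd k"
proof -
  have "load sz (p(i := Some (Junk k))) (Bin b) = load sz p (Bin b)" for b
    using load_fun_upd_Some[OF i(2) packing_inv_finite_dom[OF inv]] by simp
  moreover have "is_open (p(i := Some (Junk k))) b = is_open p b" for b
    using is_open_fun_upd_Some[of p i, OF i(2)] by simp
  ultimately show ?thesis
    using inv i unfolding packing_inv_def by auto
qed

lemma packing_inv_arrive_bad: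
  assumes inv: "packing_inv \<alpha> sz n p cl gd k" and i: "i < n" "p i = None"
    and \<alpha>: "\<alpha> < 1/2" and x: "size_in_class c (sz i)"
    and b: "is_open p b" "cl b = c" "\<not> gd b"
  shows "packing_inv \<alpha> sz n (p(i := Some (Bin b))) cl (gd(b := fpar c \<le> load sz p (Bin b) + sz i)) k"
proof -
  let ?p = "p(i := Some (Bin b))" and ?gd = "gd(b := fpar c \<le> load sz p (Bin b) + sz i)"
  have ld: "load sz ?p (Bin b') = load sz p (Bin b') + (if b' = b then sz i else 0)" for b'
    using load_fun_upd_Some[OF i(2) packing_inv_finite_dom[OF inv]] by simp
  have op: "is_open ?p b' = is_open p b'" for b'
    using is_open_fun_upd_Some[of p i, OF i(2)] b by auto
  have "inj_on cl {b'. is_open p b' \<and> \<not> gd b'}" using inv unfolding packing_inv_def by blast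
  then have "inj_on cl {b'. is_open ?p b' \<and> \<not> ?gd b'}"
    by (rule inj_on_subset) (use b in \<open>auto simp: op\<close>)
  moreover have "\<alpha> \<le> load sz ?p (Bin b)" if "?gd b"
    using that fpar_ge_half[of c] \<alpha> by (simp add: ld)
  ultimately show ?thesis
    using inv i x b unfolding packing_inv_def op by (auto simp: ld)
qed

lemma packing_inv_arrive_good:
  assumes inv: "packing_inv \<alpha> sz n p cl gd k" and i: "i < n" "p i = None"
    and x: "size_in_class c (sz i)" and b: "is_open p b" "cl b = c" "gd b"
  shows "packing_inv \<alpha> sz n (p(i := Some (Bin b))) cl gd k"
proof -
  let ?p = "p(i := Some (Bin b))"
  have ld: "load sz ?p (Bin b') = load sz p (Bin b') + (if b' = b then sz i else 0)" for b'
    using load_fun_upd_Some[OF i(2) packing_inv_finite_dom[OF inv]] by simp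
  have op: "is_open ?p b' = is_open p b'" for b'
    using is_open_fun_upd_Some[of p i, OF i(2)] b by auto
  show ?thesis
    using inv i x b size_in_class_pos[OF x]
    unfolding packing_inv_def op by (auto simp: ld)
qed

text \<open>A new Bad bin cannot duplicate the class of an existing Bad bin: the item is small
  (\<open>\<le> 1 - f\<close>) and would have fitted there.\<close>
lemma packing_inv_arrive_new:
  assumes inv: "packing_inv \<alpha> sz n p cl gd k" and i: "i < n" "p i = None"
    and \<alpha>: "\<alpha> < 1/2" and x: "size_in_class c (sz i)" "c < k"
    and b: "\<not> is_open p b"
    and no_bad: "\<forall>b'. \<not> (is_open p b' \<and> cl b' = c \<and> \<not> gd b' \<and> load sz p (Bin b') \<le> 1 - sz i)"
  shows "packing_inv \<alpha> sz n (p(i := Some (Bin b))) (cl(b := c)) (gd(b := fpar c \<le> sz i)) k"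
proof -
  let ?p = "p(i := Some (Bin b))" and ?cl = "cl(b := c)" and ?gd = "gd(b := fpar c \<le> sz i)"
  have ld: "load sz ?p (Bin b') = load sz p (Bin b') + (if b' = b then sz i else 0)" for b'
    using load_fun_upd_Some[OF i(2) packing_inv_finite_dom[OF inv]] by simp
  have op: "is_open ?p b' = (is_open p b' \<or> b' = b)" for b'
    using is_open_fun_upd_Some[of p i, OF i(2)] by auto
  have ld0: "load sz p (Bin b) = 0" using load_closed[OF b] .
  have not_b: "p j \<noteq> Some (Bin b)" for j using b unfolding is_open_def by auto
  have inj: "inj_on cl {b'. is_open p b' \<and> \<not> gd b'}" using inv unfolding packing_inv_def by blast
  have bad_eq: "{b'. is_open ?p b' \<and> \<not> ?gd b'} =
      (if fpar c \<le> sz i then {} else {b}) \<union> {b'. is_open p b' \<and> \<not> gd b'}"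
    using b by (auto simp: op)
  have "inj_on ?cl {b'. is_open ?p b' \<and> \<not> ?gd b'}"
  proof (cases "fpar c \<le> sz i")
    case True
    then show ?thesis using inj b unfolding bad_eq by (simp add: inj_on_def)
  next
    case False
    then have small: "sz i \<le> 1 - fpar c" using size_in_class_fpar[OF x(1)] by simp
    have "cl b' \<noteq> c" if "is_open p b'" "\<not> gd b'" for b'
    proof
      assume "cl b' = c"
      then have "load sz p (Bin b') < fpar c" using inv that unfolding packing_inv_def by blast
      then show False using no_bad that \<open>cl b' = c\<close> small by force
    qed
    then show ?thesis using inj b False unfolding bad_eq by (auto simp: inj_on_def)
  qed
  moreover have "\<alpha> \<le> load sz ?p (Bin b)" if "?gd b"
    using that fpar_ge_half[of c] \<alpha> ld0 by (simp add: ld)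
  ultimately show ?thesis
    using inv i x b ld0 not_b unfolding packing_inv_def op
    by (auto simp: ld)
qed

lemma packing_inv_depart_plain:
  assumes inv: "packing_inv \<alpha> sz n p cl gd g" and i: "p i = Some l"
    and no_migration: "\<not> (\<exists>b. l = Bin b \<and> gd b \<and> load sz (p(i := None)) l < \<alpha>)"
  shows "packing_inv \<alpha> sz n (p(i := None)) cl gd g"
proof -
  let ?p = "p(i := None)"
  note opened = is_open_fun_upd_None[of p i]
  have ld: "load sz ?p l' = load sz p l' - (if l' = l then sz i else 0)" for l'
    using load_fun_upd_None[OF i packing_inv_finite_dom[OF inv]] .
  have bad: "load sz ?p (Bin b) < fpar (cl b)" if "is_open ?p b" "\<not> gd b" for b
  proof -
    have "load sz p (Bin b) < fpar (cl b)"
      using inv opened[OF that(1)] that(2) unfolding packing_inv_def by blast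
    moreover have "0 < sz i" if "l = Bin b"
      using inv i that size_in_class_pos unfolding packing_inv_def by blast
    ultimately show ?thesis by (auto simp: ld)
  qed
  have good: "\<alpha> \<le> load sz ?p (Bin b)" if "is_open ?p b" "gd b" for b
  proof (cases "l = Bin b")
    case True
    then show ?thesis using no_migration that(2) by auto
  next
    case False
    have "\<alpha> \<le> load sz p (Bin b)"
      using inv opened[OF that(1)] that(2) unfolding packing_inv_def by blast
    then show ?thesis using False by (simp add: ld)
  qed
  have "{b. is_open ?p b \<and> \<not> gd b} \<subseteq> {b. is_open p b \<and> \<not> gd b}"
    using opened by blast
  then have "inj_on cl {b. is_open ?p b \<and> \<not> gd b}"
    using inv inj_on_subset unfolding packing_inv_def by blast
  then show ?thesis
    using inv bad good opened unfolding packing_inv_def by auto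
qed

section \<open>Migration\<close>

locale migration =
  fixes \<alpha> :: real and sz :: "nat \<Rightarrow> real" and n :: nat
    and p :: "nat \<Rightarrow> loc option" and cl :: "nat \<Rightarrow> nat" and gd :: "nat \<Rightarrow> bool" and g :: nat
    and i b :: nat and M badl goodl fr :: "nat list"
  assumes inv: "packing_inv \<alpha> sz n p cl gd g" and \<alpha>: "\<alpha> < 1/2"
    and departing: "p i = Some (Bin b)" and good_b: "gd b"
    and moved: "distinct M" "set M = {j. (p(i := None)) j = Some (Bin b)}"
    and bad_list: "set badl = {b'. is_open (p(i := None)) b' \<and> cl b' = cl b \<and> \<not> gd b'}"
    and good_list: "set goodl = {b'. is_open (p(i := None)) b' \<and> cl b' = cl b \<and> gd b' \<and> b' \<noteq> b}"
    and fresh: "distinct fr" "length M \<le> length fr"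
      "\<forall>b'\<in>set fr. \<not> is_open (p(i := None)) b' \<and> b' \<noteq> b"
begin

abbreviation "p_rest \<equiv> p(i := None)"
abbreviation "ord \<equiv> badl @ goodl"
abbreviation "A \<equiv> first_fit sz ord fr (\<lambda>b'. load sz p_rest (Bin b')) M"
abbreviation "new_bins \<equiv> set (map snd A) - set ord"

definition p_new :: "nat \<Rightarrow> loc option" where
  "p_new = (\<lambda>j. case map_of A j of Some b' \<Rightarrow> Some (Bin b') | None \<Rightarrow> p_rest j)"

definition cl_new :: "nat \<Rightarrow> nat" where
  "cl_new = (\<lambda>b'. if b' \<in> new_bins then cl b else cl b')"

definition gd_new :: "nat \<Rightarrow> bool" where
  "gd_new = (\<lambda>b'. if b' \<in> new_bins then fpar (cl b) \<le> load sz p_new (Bin b')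
                  else if b' \<in> set ord then gd b' \<or> fpar (cl b) \<le> load sz p_new (Bin b')
                  else gd b')"

lemma rest_SomeD: "p_rest j = Some l \<Longrightarrow> p j = Some l"
  by (auto split: if_splits)

lemma map_fst_A: "map fst A = M"
  using map_fst_first_fit[OF fresh(2)] .

lemma A_targets: "(j, b') \<in> set A \<Longrightarrow> b' \<in> set ord \<union> set fr"
  by (rule first_fit_targets)

lemma ord_bins: "b' \<in> set ord \<Longrightarrow> is_open p_rest b' \<and> cl b' = cl b \<and> b' \<noteq> b"
  using bad_list good_list good_b by auto

lemma new_bins_fresh:
  assumes "b' \<in> new_bins"
  shows "\<not> is_open p_rest b' \<and> b' \<noteq> b"
proof -
  obtain j where "(j, b') \<in> set A" "b' \<notin> set ord" using assms by auto
  then have "b' \<in> set fr" using A_targets by blast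
  then show ?thesis using fresh(3) by blast
qed

lemma map_of_A_iff: "map_of A j = Some b' \<longleftrightarrow> (j, b') \<in> set A"
  by (rule map_of_eq_Some_iff) (simp add: map_fst_A moved(1))

lemma p_new_moved: "(j, b') \<in> set A \<Longrightarrow> p_new j = Some (Bin b')"
  by (simp add: p_new_def map_of_A_iff[symmetric])

lemma p_new_unmoved:
  assumes "j \<notin> set M"
  shows "p_new j = p_rest j"
proof -
  have "j \<notin> fst ` set A" using assms map_fst_A by (metis set_map)
  then have "map_of A j = None" by (simp add: map_of_eq_None_iff)
  then show ?thesis by (simp only: p_new_def option.case)
qed

lemma moved_assigned:
  assumes "j \<in> set M"
  shows "\<exists>b'. (j, b') \<in> set A"
proof -
  have "j \<in> set (map fst A)" using assms map_fst_A by simp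
  then show ?thesis by auto
qed

lemma assigned_moved:
  assumes "(j, b') \<in> set A"
  shows "j \<in> set M"
proof -
  have "j \<in> set (map fst A)" using assms by force
  then show ?thesis using map_fst_A by simp
qed

lemma moved_size: "j \<in> set M \<Longrightarrow> size_in_class (cl b) (sz j)"
  using inv moved(2) rest_SomeD unfolding packing_inv_def by blast

lemma load_rest: "b' \<noteq> b \<Longrightarrow> load sz p_rest (Bin b') = load sz p (Bin b')"
  using load_fun_upd_None[OF departing packing_inv_finite_dom[OF inv]] by simp

lemma load_p_new:
  assumes "b' \<noteq> b"
  shows "load sz p_new (Bin b') = load sz p_rest (Bin b') + assigned_size sz A b'"
proof -
  have "p_new j = Some (Bin b') \<longleftrightarrow> p_rest j = Some (Bin b') \<or> (j, b') \<in> set A" for j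
  proof (cases "j \<in> set M")
    case True
    then obtain b'' where b'': "(j, b'') \<in> set A" using moved_assigned by blast
    then have "p_new j = Some (Bin b'')" by (rule p_new_moved)
    moreover have "(j, b') \<in> set A \<longleftrightarrow> b' = b''"
      using map_of_A_iff[of j b'] map_of_A_iff[of j b''] b'' by auto
    moreover have "p_rest j = Some (Bin b)" using True moved(2) by blast
    ultimately show ?thesis using assms by auto
  next
    case False
    then have "(j, b') \<notin> set A" using assigned_moved by blast
    then show ?thesis using p_new_unmoved[OF False] by simp
  qed
  then have split: "{j. p_new j = Some (Bin b')} = {j. p_rest j = Some (Bin b')} \<union> {j. (j, b') \<in> set A}"
    by blast
  have fin1: "finite {j. p_rest j = Some (Bin b')}"
    using packing_inv_finite_dom[OF inv] by (rule finite_subset[rotated]) (auto dest: rest_SomeD)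
  have fin2: "finite {j. (j, b') \<in> set A}"
    by (rule finite_subset[of _ "fst ` set A"]) force+
  have disj: "{j. p_rest j = Some (Bin b')} \<inter> {j. (j, b') \<in> set A} = {}"
    using moved(2) assms by (auto dest: assigned_moved)
  have "distinct (map fst A)" using map_fst_A moved(1) by simp
  then show ?thesis
    unfolding load_def[of sz p_new] load_def[of sz p_rest "Bin b'"] split
      sum.union_disjoint[OF fin1 fin2 disj] by (simp add: assigned_size_eq_sum)
qed

lemma assigned_size_nonneg_A: "0 \<le> assigned_size sz A b'"
proof (rule assigned_size_nonneg)
  show "\<forall>x\<in>set (map fst A). 0 \<le> sz x"
    unfolding map_fst_A by (meson less_imp_le moved_size size_in_class_pos)
qed

lemma untouched_bin:
  assumes "is_open p_new b'" "b' \<notin> set ord" "b' \<notin> new_bins"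
  shows "is_open p b' \<and> cl b' \<noteq> cl b \<and> load sz p_new (Bin b') = load sz p (Bin b') \<and>
    cl_new b' = cl b' \<and> gd_new b' = gd b'"
proof -
  obtain j where j: "p_new j = Some (Bin b')" using assms(1) unfolding is_open_def by blast
  have "j \<notin> set M"
  proof
    assume "j \<in> set M"
    then obtain b'' where A: "(j, b'') \<in> set A" using moved_assigned by blast
    then have "b'' = b'" using j p_new_moved by simp
    then show False using A assms(2,3) by force
  qed
  then have rest_j: "p_rest j = Some (Bin b')" using j p_new_unmoved by simp
  then have rest: "is_open p_rest b'" unfolding is_open_def by blast
  have "b' \<noteq> b" using moved(2) \<open>j \<notin> set M\<close> rest_j by auto
  have "cl b' \<noteq> cl b"
  proof
    assume "cl b' = cl b"
    then have "b' \<in> set ord" using rest \<open>b' \<noteq> b\<close>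
      by (cases "gd b'") (simp_all add: bad_list good_list)
    then show False using assms(2) by blast
  qed
  moreover have "load sz p_new (Bin b') = load sz p (Bin b')"
    using load_p_new[OF \<open>b' \<noteq> b\<close>] load_rest[OF \<open>b' \<noteq> b\<close>]
      assigned_size_not_target assms(2,3) by simp
  moreover have "cl_new b' = cl b'" "gd_new b' = gd b'"
    using assms(2,3) by (simp_all add: cl_new_def gd_new_def)
  ultimately show ?thesis using is_open_fun_upd_None[OF rest] by blast
qed

lemma touched_class: "b' \<in> set ord \<or> b' \<in> new_bins \<Longrightarrow> cl_new b' = cl b"
  using ord_bins by (auto simp: cl_new_def)

lemma p_new_Junk:
  assumes "p_new j = Some (Junk k)"
  shows "p j = Some (Junk k)"
proof -
  have "j \<notin> set M" using assms moved_assigned p_new_moved by fastforce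
  then show ?thesis using assms p_new_unmoved rest_SomeD by simp
qed

lemma dom_p_new: "dom p_new \<subseteq> dom p"
proof
  fix j assume "j \<in> dom p_new"
  show "j \<in> dom p"
  proof (cases "j \<in> set M")
    case True
    then show ?thesis using moved(2) rest_SomeD by blast
  next
    case False
    then show ?thesis using \<open>j \<in> dom p_new\<close> p_new_unmoved by (auto split: if_splits)
  qed
qed

lemma class_p_new:
  assumes "is_open p_new b'"
  shows "cl_new b' < g"
proof (cases "b' \<in> set ord \<or> b' \<in> new_bins")
  case True
  have "cl b < g" using inv departing unfolding packing_inv_def is_open_def by blast
  then show ?thesis using touched_class[OF True] by simp
next
  case False
  then show ?thesis using untouched_bin[OF assms] inv unfolding packing_inv_def by auto
qed

lemma good_load_p_new:
  assumes "is_open p_new b'" "gd_new b'"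
  shows "\<alpha> \<le> load sz p_new (Bin b')"
proof -
  have full: "\<alpha> \<le> load sz p_new (Bin b')" if "fpar (cl b) \<le> load sz p_new (Bin b')"
    using that fpar_ge_half[of "cl b"] \<alpha> by linarith
  consider "b' \<in> new_bins" | "b' \<in> set ord" "b' \<notin> new_bins" | "b' \<notin> set ord" "b' \<notin> new_bins"
    by blast
  then show ?thesis
  proof cases
    case 1
    then show ?thesis using assms(2) full by (simp add: gd_new_def)
  next
    case 2
    then have "gd b' \<or> fpar (cl b) \<le> load sz p_new (Bin b')" using assms(2) by (simp add: gd_new_def)
    then show ?thesis
    proof
      assume "gd b'"
      obtain "is_open p_rest b'" "b' \<noteq> b" using ord_bins[OF 2(1)] by blast
      then have "\<alpha> \<le> load sz p (Bin b')"
        using inv \<open>gd b'\<close> is_open_fun_upd_None unfolding packing_inv_def by blast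
      then show ?thesis
        using load_p_new[OF \<open>b' \<noteq> b\<close>] load_rest[OF \<open>b' \<noteq> b\<close>] assigned_size_nonneg_A[of b']
        by linarith
    qed (rule full)
  next
    case 3
    then show ?thesis using untouched_bin[OF assms(1)] assms(2) inv unfolding packing_inv_def by auto
  qed
qed

lemma bad_load_p_new:
  assumes "is_open p_new b'" "\<not> gd_new b'"
  shows "load sz p_new (Bin b') < fpar (cl_new b')"
proof (cases "b' \<in> set ord \<or> b' \<in> new_bins")
  case True
  then have "\<not> fpar (cl b) \<le> load sz p_new (Bin b')"
    using assms(2) by (auto simp: gd_new_def split: if_splits)
  then show ?thesis using touched_class[OF True] by simp
next
  case False
  then show ?thesis using untouched_bin[OF assms(1)] assms(2) inv unfolding packing_inv_def by auto
qed

lemma class_of_items_p_new: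
  assumes "p_new j = Some (Bin b')"
  shows "size_in_class (cl_new b') (sz j)"
proof (cases "j \<in> set M")
  case True
  then obtain b'' where A: "(j, b'') \<in> set A" using moved_assigned by blast
  then have "b'' = b'" using assms p_new_moved by simp
  then have "b' \<in> set ord \<or> b' \<in> new_bins" using A by force
  then show ?thesis using touched_class moved_size[OF True] by simp
next
  case False
  then have "p_rest j = Some (Bin b')" using assms p_new_unmoved by simp
  then have "is_open p_rest b'" "p j = Some (Bin b')"
    unfolding is_open_def using rest_SomeD by blast+
  then have "cl_new b' = cl b'" using new_bins_fresh by (auto simp: cl_new_def)
  then show ?thesis using inv \<open>p j = Some (Bin b')\<close> unfolding packing_inv_def by simp
qed

lemma card_bad_list_le_1: "card (set badl) \<le> 1"
proof -
  have inj: "inj_on cl {b'. is_open p b' \<and> \<not> gd b'}" using inv unfolding packing_inv_def by blast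
  have "x = y" if "x \<in> set badl" "y \<in> set badl" for x y
  proof (rule inj_onD[OF inj])
    show "cl x = cl y" using that bad_list by simp
    show "x \<in> {b'. is_open p b' \<and> \<not> gd b'}" "y \<in> {b'. is_open p b' \<and> \<not> gd b'}"
      using that bad_list is_open_fun_upd_None by blast+
  qed
  then show ?thesis using card_le_Suc0_iff_eq[of "set badl"] by auto
qed

abbreviation "underfull_after \<equiv> underfull sz (fpar (cl b)) (set badl) ord (\<lambda>b'. load sz p_rest (Bin b')) A"

lemma card_underfull_after_le_1: "card underfull_after \<le> 1"
proof (rule card_underfull_first_fit_le_1)
  show "card {b' \<in> set badl. load sz p_rest (Bin b') < fpar (cl b)} \<le> 1"
    by (rule le_trans[OF card_mono card_bad_list_le_1]) auto
  show "\<forall>b'\<in>set fr. load sz p_rest (Bin b') = 0" using fresh(3) load_closed by blast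
  show "set fr \<inter> set ord = {}" using fresh(3) ord_bins by blast
  show "\<forall>x\<in>set M. 0 \<le> sz x \<and> (sz x \<le> 1 - fpar (cl b) \<or> fpar (cl b) \<le> sz x)"
    using moved_size size_in_class_pos size_in_class_fpar by (meson less_imp_le)
qed (use fresh(1) in auto)

lemma touched_bad_underfull_after:
  assumes "is_open p_new b'" "\<not> gd_new b'" "b' \<in> set ord \<or> b' \<in> new_bins"
  shows "b' \<in> underfull_after"
proof -
  have "b' \<noteq> b" using assms(3) ord_bins new_bins_fresh by blast
  have "load sz p_new (Bin b') < fpar (cl b)"
    using bad_load_p_new[OF assms(1,2)] touched_class[OF assms(3)] by simp
  moreover have "b' \<in> set badl \<union> new_bins"
    using assms(2,3) good_list by (auto simp: gd_new_def split: if_splits)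
  ultimately show ?thesis unfolding underfull_def using load_p_new[OF \<open>b' \<noteq> b\<close>] by simp
qed

text \<open>The Bad bins of the class of \<open>b\<close> after the migration are among the Bad bins
  before it and the bins opened by FirstFit, so there is at most one of them.\<close>
lemma bad_bins_inj_p_new: "inj_on cl_new {b'. is_open p_new b' \<and> \<not> gd_new b'}"
proof (rule inj_onI)
  fix b1 b2
  assume b1: "b1 \<in> {b'. is_open p_new b' \<and> \<not> gd_new b'}"
    and b2: "b2 \<in> {b'. is_open p_new b' \<and> \<not> gd_new b'}" and eq: "cl_new b1 = cl_new b2"
  consider "b1 \<in> set ord \<or> b1 \<in> new_bins" "b2 \<in> set ord \<or> b2 \<in> new_bins"
    | "b1 \<notin> set ord" "b1 \<notin> new_bins" "b2 \<notin> set ord" "b2 \<notin> new_bins"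
    | "b1 \<in> set ord \<or> b1 \<in> new_bins" "b2 \<notin> set ord" "b2 \<notin> new_bins"
    | "b2 \<in> set ord \<or> b2 \<in> new_bins" "b1 \<notin> set ord" "b1 \<notin> new_bins"
    by blast
  then show "b1 = b2"
  proof cases
    case 1
    then have "b1 \<in> underfull_after" "b2 \<in> underfull_after"
      using touched_bad_underfull_after b1 b2 by auto
    moreover have "finite underfull_after" by (simp add: underfull_def)
    ultimately show ?thesis using card_underfull_after_le_1 card_le_Suc0_iff_eq by auto
  next
    case 2
    then have "is_open p b1" "is_open p b2" "\<not> gd b1" "\<not> gd b2" "cl b1 = cl b2"
      using untouched_bin b1 b2 eq by auto
    then show ?thesis using inv unfolding packing_inv_def by (auto dest: inj_onD)
  next
    case 3
    then have "cl_new b1 = cl b" "cl_new b2 \<noteq> cl b"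
      using touched_class untouched_bin b2 by auto
    then show ?thesis using eq by simp
  next
    case 4
    then have "cl_new b2 = cl b" "cl_new b1 \<noteq> cl b"
      using touched_class untouched_bin b1 by auto
    then show ?thesis using eq by simp
  qed
qed

lemma migrate_result_eq:
  assumes "pos \<sigma> = p" "cls \<sigma> = cl" "good \<sigma> = gd"
  shows "migrate_result sz (fpar (cl b)) (cl b) ord A (\<sigma>\<lparr>pos := p_rest\<rparr>) =
    \<sigma>\<lparr>pos := p_new, cls := cl_new, good := gd_new\<rparr>"
proof -
  have sel: "pos (\<sigma>\<lparr>pos := p_rest\<rparr>) = p_rest" "cls (\<sigma>\<lparr>pos := p_rest\<rparr>) = cl"
    "good (\<sigma>\<lparr>pos := p_rest\<rparr>) = gd" using assms by simp_all
  show ?thesis unfolding migrate_result_def Let_def sel p_new_def cl_new_def gd_new_def by simp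
qed

lemma packing_inv_p_new: "packing_inv \<alpha> sz n p_new cl_new gd_new g"
proof -
  have "dom p \<subseteq> {..<n}" "\<forall>j k. p j = Some (Junk k) \<longrightarrow> k \<le> g"
    using inv unfolding packing_inv_def by blast+
  then have "dom p_new \<subseteq> {..<n}" "\<forall>j k. p_new j = Some (Junk k) \<longrightarrow> k \<le> g"
    using dom_p_new p_new_Junk by blast+
  then show ?thesis
    unfolding packing_inv_def
    using class_p_new good_load_p_new bad_load_p_new class_of_items_p_new bad_bins_inj_p_new
    by blast
qed

end

lemma gk_le_new_guess: "gk \<sigma> \<le> new_guess \<sigma>"
  by (simp add: new_guess_def)

lemma packing_inv_step:
  assumes step: "step \<alpha> sz \<sigma> e \<sigma>'" and inv: "packing_inv \<alpha> sz n (pos \<sigma>) (cls \<sigma>) (good \<sigma>) (gk \<sigma>)"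
    and \<alpha>: "\<alpha> < 1/2" and sizes: "\<forall>j<n. 0 \<le> sz j \<and> sz j \<le> 1"
    and arrival: "\<forall>i. e = Arr i \<longrightarrow> i < n \<and> pos \<sigma> i = None"
  shows "packing_inv \<alpha> sz n (pos \<sigma>') (cls \<sigma>') (good \<sigma>') (gk \<sigma>')"
proof -
  have inv_new: "packing_inv \<alpha> sz n (pos \<sigma>) (cls \<sigma>) (good \<sigma>) (new_guess \<sigma>)"
    using packing_inv_mono_guess[OF inv gk_le_new_guess] .
  have in_class: "size_in_class (item_class (sz i)) (sz i)" if "0 < sz i" "i < n" for i
    using size_in_class_item_class[OF that(1)] sizes that(2) by blast
  from step show ?thesis
  proof cases
    case (arr_junk k i)
    then show ?thesis using packing_inv_arrive_junk[OF inv_new] arrival by simp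
  next
    case (arr_bad k i c b)
    then show ?thesis
      using packing_inv_arrive_bad[OF inv_new _ _ \<alpha> in_class] arrival unfolding bad_cand_def by simp
  next
    case (arr_good k i c b)
    then show ?thesis
      using packing_inv_arrive_good[OF inv_new _ _ in_class] arrival unfolding good_cand_def by simp
  next
    case (arr_new k i c b)
    then show ?thesis
      using packing_inv_arrive_new[OF inv_new _ _ \<alpha> in_class] arrival unfolding bad_cand_def by simp
  next
    case (dep_plain i l p')
    then show ?thesis using packing_inv_depart_plain[OF inv] by simp
  next
    case (dep_migrate i b p' c M badl goodl fr A')
    interpret migration \<alpha> sz n "pos \<sigma>" "cls \<sigma>" "good \<sigma>" "gk \<sigma>" i b M badl goodl fr
      by unfold_locales (use inv \<alpha> dep_migrate in auto)
    have "\<sigma>' = migrate_result sz (fpar (cls \<sigma> b)) (cls \<sigma> b) ord A (\<sigma>\<lparr>pos := p_rest\<rparr>)"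
      using dep_migrate(2,4,7,17) by simp
    then show ?thesis using migrate_result_eq packing_inv_p_new by simp
  qed
qed

lemma dom_pos_step:
  assumes "step \<alpha> sz \<sigma> e \<sigma>'"
  shows "dom (pos \<sigma>') = (case e of Arr i \<Rightarrow> insert i (dom (pos \<sigma>)) | Dep i \<Rightarrow> dom (pos \<sigma>) - {i})"
  using assms
proof cases
  case (dep_migrate i b p' c M badl goodl fr A)
  have "fst ` set A = set M"
    using map_fst_first_fit[OF dep_migrate(15)] dep_migrate(17) by (metis set_map)
  then have moved: "map_of A j \<noteq> None \<longleftrightarrow> j \<in> set M" for j by (simp add: map_of_eq_None_iff)
  have sel: "pos (\<sigma>\<lparr>pos := p'\<rparr>) = p'" by simp
  have "pos \<sigma>' j = (case map_of A j of Some b'' \<Rightarrow> Some (Bin b'') | None \<Rightarrow> p' j)" for j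
    using dep_migrate(2) unfolding migrate_result_def Let_def sel by simp
  then have "pos \<sigma>' j \<noteq> None \<longleftrightarrow> p' j \<noteq> None" for j
    using moved[of j] dep_migrate(9) by (cases "map_of A j") auto
  then have "dom (pos \<sigma>') = dom p'" by (auto simp: dom_def)
  then show ?thesis using dep_migrate(1,4) by auto
qed auto

lemma gk_step:
  "step \<alpha> sz \<sigma> e \<sigma>' \<Longrightarrow> gk \<sigma>' = (case e of Arr i \<Rightarrow> new_guess \<sigma> | Dep i \<Rightarrow> gk \<sigma>)"
  by (induction rule: step.induct) (simp_all add: migrate_result_def Let_def)

lemma new_guess_bound:
  assumes "num_items \<sigma> \<le> r" "gk \<sigma> = 0 \<or> 2 ^ (gk \<sigma> - 1) \<le> r"
  shows "new_guess \<sigma> = 0 \<or> 2 ^ (new_guess \<sigma> - 1) \<le> r"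
  using assms by (auto simp: new_guess_def)

definition active_items :: "event list \<Rightarrow> nat \<Rightarrow> nat set" where
  "active_items es k = {j. Arr j \<in> set (take k es) \<and> Dep j \<notin> set (take k es)}"

lemma valid_events_ordered:
  assumes "valid_events n arr dur es" "q < r" "r < length es"
  shows "etime arr dur (es ! q) < etime arr dur (es ! r) \<or>
    (etime arr dur (es ! q) = etime arr dur (es ! r) \<and> (is_dep (es ! q) \<or> \<not> is_dep (es ! r)))"
  using assms unfolding valid_events_def sorted_wrt_iff_nth_less by (elim conjE) simp

lemma valid_events_Arr: "valid_events n arr dur es \<Longrightarrow> Arr i \<in> set es \<longleftrightarrow> i < n"
  unfolding valid_events_def by auto

lemma valid_events_Dep: "valid_events n arr dur es \<Longrightarrow> Dep i \<in> set es \<longleftrightarrow> i < n"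
  unfolding valid_events_def by auto

lemma in_set_take_nth: "x \<in> set (take k es) \<Longrightarrow> \<exists>q<k. q < length es \<and> es ! q = x"
  by (auto simp: in_set_conv_nth)

lemma arrival_unprocessed:
  assumes ve: "valid_events n arr dur es" and vi: "valid_instance n arr sz dur"
    and k: "k < length es" and e: "es ! k = Arr i"
  shows "i < n" "Arr i \<notin> set (take k es)" "Dep i \<notin> set (take k es)"
proof -
  show i: "i < n" using valid_events_Arr[OF ve] nth_mem[OF k] e by simp
  show "Arr i \<notin> set (take k es)"
  proof
    assume "Arr i \<in> set (take k es)"
    then obtain q where "q < k" "es ! q = es ! k" using e by (auto dest: in_set_take_nth)
    then show False using ve k nth_eq_iff_index_eq unfolding valid_events_def by fastforce
  qed
  show "Dep i \<notin> set (take k es)"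
  proof
    assume "Dep i \<in> set (take k es)"
    then obtain q where "q < k" "es ! q = Dep i" by (auto dest: in_set_take_nth)
    then have "arr i + dur i \<le> arr i" using valid_events_ordered[OF ve _ k] e by fastforce
    moreover have "0 < dur i" using vi i unfolding valid_instance_def by simp
    ultimately show False by linarith
  qed
qed

lemma active_items_present_at_arrival:
  assumes ve: "valid_events n arr dur es" and k: "k < length es" and e: "es ! k = Arr i"
  shows "active_items es k \<subseteq> present n arr dur (arr i)"
proof
  fix j assume "j \<in> active_items es k"
  then have a: "Arr j \<in> set (take k es)" and d: "Dep j \<notin> set (take k es)"
    unfolding active_items_def by auto
  obtain q where q: "q < k" "q < length es" "es ! q = Arr j" using a by (auto dest: in_set_take_nth)
  have j: "j < n" using valid_events_Arr[OF ve] nth_mem[OF q(2)] q(3) by simp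
  obtain r where r: "r < length es" "es ! r = Dep j"
    using valid_events_Dep[OF ve] j by (metis in_set_conv_nth)
  have "\<not> r < k" using r d by (auto simp: in_set_conv_nth)
  moreover have "r \<noteq> k" using r e by auto
  ultimately have "k < r" by simp
  then have "arr i < arr j + dur j" using valid_events_ordered[OF ve _ r(1)] r(2) e by fastforce
  moreover have "arr j \<le> arr i" using valid_events_ordered[OF ve q(1) k] q(3) e by auto
  ultimately show "j \<in> present n arr dur (arr i)" unfolding present_def using j by auto
qed

lemma card_present_le_rho: "card (present n arr dur t) \<le> rho n arr dur"
proof -
  have "card (present n arr dur t') \<le> n" for t'
    using card_mono[of "{..<n}" "present n arr dur t'"] unfolding present_def by auto
  then have "finite (range (\<lambda>t. card (present n arr dur t)))"
    by (meson finite_atMost finite_subset image_subsetI atMost_iff)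
  then show ?thesis unfolding rho_def by (rule Max_ge) simp
qed

lemma active_items_Suc_Arr:
  "k < length es \<Longrightarrow> es ! k = Arr i \<Longrightarrow> Dep i \<notin> set (take k es) \<Longrightarrow>
    active_items es (Suc k) = insert i (active_items es k)"
  unfolding active_items_def by (auto simp: take_Suc_conv_app_nth)

lemma active_items_Suc_Dep:
  "k < length es \<Longrightarrow> es ! k = Dep i \<Longrightarrow> active_items es (Suc k) = active_items es k - {i}"
  unfolding active_items_def by (auto simp: take_Suc_conv_app_nth)

lemma num_items_le_rho_at_arrival:
  assumes ve: "valid_events n arr dur es" and k: "k < length es" and e: "es ! k = Arr i"
    and dom: "dom (pos \<sigma>) = active_items es k"
  shows "num_items \<sigma> \<le> rho n arr dur"
proof -
  have "num_items \<sigma> = card (active_items es k)" unfolding num_items_def dom[symmetric] dom_def ..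
  also have "\<dots> \<le> card (present n arr dur (arr i))"
    by (rule card_mono[OF _ active_items_present_at_arrival[OF ve k e]]) (simp add: present_def)
  also have "\<dots> \<le> rho n arr dur" by (rule card_present_le_rho)
  finally show ?thesis .
qed

text \<open>The guess \<open>2 ^ gk\<close> is only doubled when at least \<open>2 ^ gk\<close> items are present,
  so it never exceeds twice the maximal number \<open>\<rho>\<close> of simultaneous items.\<close>
lemma run_invariant:
  assumes vi: "valid_instance n arr sz dur" and ve: "valid_events n arr dur es"
    and run: "is_run \<alpha> sz es ss" and \<alpha>: "\<alpha> < 1/2" and "k \<le> length es"
  shows "packing_inv \<alpha> sz n (pos (ss ! k)) (cls (ss ! k)) (good (ss ! k)) (gk (ss ! k)) \<and>
    dom (pos (ss ! k)) = active_items es k \<and>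
    (gk (ss ! k) = 0 \<or> 2 ^ (gk (ss ! k) - 1) \<le> rho n arr dur)"
  using \<open>k \<le> length es\<close>
proof (induction k)
  case 0
  have "ss ! 0 = init_state" using run unfolding is_run_def by blast
  then show ?case
    by (simp add: init_state_def packing_inv_def is_open_def active_items_def)
next
  case (Suc k)
  then have k: "k < length es" by simp
  have inv: "packing_inv \<alpha> sz n (pos (ss ! k)) (cls (ss ! k)) (good (ss ! k)) (gk (ss ! k))"
    and dom: "dom (pos (ss ! k)) = active_items es k"
    and guess: "gk (ss ! k) = 0 \<or> 2 ^ (gk (ss ! k) - 1) \<le> rho n arr dur"
    using Suc by auto
  have step: "step \<alpha> sz (ss ! k) (es ! k) (ss ! Suc k)" using run k unfolding is_run_def by blast
  have sizes: "\<forall>j<n. 0 \<le> sz j \<and> sz j \<le> 1" using vi unfolding valid_instance_def by simp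
  show ?case
  proof (cases "es ! k")
    case (Arr i)
    note fresh = arrival_unprocessed[OF ve vi k Arr]
    have "pos (ss ! k) i = None" using dom fresh(2) unfolding active_items_def by blast
    then have "packing_inv \<alpha> sz n (pos (ss ! Suc k)) (cls (ss ! Suc k)) (good (ss ! Suc k)) (gk (ss ! Suc k))"
      using packing_inv_step[OF step inv \<alpha> sizes] Arr fresh(1) by simp
    moreover have "dom (pos (ss ! Suc k)) = active_items es (Suc k)"
      using dom_pos_step[OF step] Arr dom active_items_Suc_Arr[OF k Arr fresh(3)] by simp
    moreover have "num_items (ss ! k) \<le> rho n arr dur"
      using num_items_le_rho_at_arrival[OF ve k Arr dom] .
    then have "gk (ss ! Suc k) = 0 \<or> 2 ^ (gk (ss ! Suc k) - 1) \<le> rho n arr dur"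
      using gk_step[OF step] Arr new_guess_bound guess by simp
    ultimately show ?thesis by blast
  next
    case (Dep i)
    then show ?thesis
      using packing_inv_step[OF step inv \<alpha> sizes] dom_pos_step[OF step] gk_step[OF step]
        dom guess active_items_Suc_Dep[OF k Dep] by simp
  qed
qed

lemma take_length_filter_sorted:
  fixes f :: "'a \<Rightarrow> real"
  shows "sorted_wrt (\<lambda>a b. f a \<le> f b) xs \<Longrightarrow>
    take (length (filter (\<lambda>e. f e \<le> t) xs)) xs = filter (\<lambda>e. f e \<le> t) xs"
proof (induction xs)
  case (Cons x xs)
  show ?case
  proof (cases "f x \<le> t")
    case False
    then have "filter (\<lambda>e. f e \<le> t) xs = []"
      using Cons.prems by (auto simp: filter_empty_conv)
    then show ?thesis using False by simp
  qed (use Cons in simp)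
qed simp

lemma active_items_state_at:
  assumes ve: "valid_events n arr dur es"
  shows "active_items es (length (filter (\<lambda>e. etime arr dur e \<le> t) es)) \<subseteq> present n arr dur t"
proof
  have "sorted_wrt (\<lambda>a b. etime arr dur a \<le> etime arr dur b) es"
    using ve unfolding valid_events_def by (auto elim: sorted_wrt_mono_rel[rotated])
  note processed = take_length_filter_sorted[OF this]
  fix j assume "j \<in> active_items es (length (filter (\<lambda>e. etime arr dur e \<le> t) es))"
  then have "Arr j \<in> set es" "arr j \<le> t" "Dep j \<notin> set (filter (\<lambda>e. etime arr dur e \<le> t) es)"
    unfolding active_items_def processed by auto
  moreover have "j < n" "Dep j \<in> set es" using calculation(1) valid_events_Arr[OF ve] valid_events_Dep[OF ve] by auto
  ultimately show "j \<in> present n arr dur t" unfolding present_def by auto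
qed

lemma state_at_invariant:
  assumes vi: "valid_instance n arr sz dur" and ve: "valid_events n arr dur es"
    and run: "is_run \<alpha> sz es ss" and \<alpha>: "\<alpha> < 1/2" and \<sigma>: "\<sigma> = state_at arr dur es ss t"
  shows "packing_inv \<alpha> sz n (pos \<sigma>) (cls \<sigma>) (good \<sigma>) (gk \<sigma>)"
    and "dom (pos \<sigma>) \<subseteq> present n arr dur t"
    and "gk \<sigma> = 0 \<or> 2 ^ (gk \<sigma> - 1) \<le> rho n arr dur"
  using run_invariant[OF vi ve run \<alpha>, of "length (filter (\<lambda>e. etime arr dur e \<le> t) es)"]
    active_items_state_at[OF ve, of t]
  unfolding \<sigma> state_at_def by auto

section \<open>Counting bins\<close>

lemma OPT_packing:
  assumes S: "S \<subseteq> {..<n}" and sizes: "\<forall>j<n. 0 \<le> sz j \<and> sz j \<le> 1"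
  obtains asg :: "nat \<Rightarrow> nat" where "\<forall>i\<in>S. asg i < OPT sz S"
    and "\<forall>b<OPT sz S. (\<Sum>i\<in>{i\<in>S. asg i = b}. sz i) \<le> 1"
proof -
  let ?fits = "\<lambda>k. \<exists>asg :: nat \<Rightarrow> nat. (\<forall>i\<in>S. asg i < k) \<and>
    (\<forall>b<k. (\<Sum>i\<in>{i\<in>S. asg i = b}. sz i) \<le> 1)"
  have "(\<Sum>i\<in>{i\<in>S. id i = b}. sz i) \<le> 1" if "b < n" for b
  proof -
    have "{i\<in>S. id i = b} = {} \<or> {i\<in>S. id i = b} = {b}" by auto
    then show ?thesis
      using sizes that by (elim disjE) (simp only: sum.empty sum.insert finite.emptyI, simp)+
  qed
  then have "?fits n" using S by (intro exI[of _ id]) auto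
  then have "?fits (OPT sz S)" unfolding OPT_def by (rule LeastI)
  then show ?thesis using that by blast
qed

lemma sum_size_le_OPT:
  assumes S: "S \<subseteq> {..<n}" and sizes: "\<forall>j<n. 0 \<le> sz j \<and> sz j \<le> 1"
  shows "(\<Sum>j\<in>S. sz j) \<le> real (OPT sz S)"
proof -
  obtain asg where asg: "\<forall>i\<in>S. asg i < OPT sz S"
    and fits: "\<forall>b<OPT sz S. (\<Sum>i\<in>{i\<in>S. asg i = b}. sz i) \<le> 1"
    using OPT_packing[OF S sizes] by blast
  have "finite S" using S finite_subset by blast
  then have "(\<Sum>j\<in>S. sz j) = (\<Sum>b<OPT sz S. \<Sum>i\<in>{i\<in>S. asg i = b}. sz i)"
    by (intro sum.group[symmetric]) (use asg in auto)
  also have "\<dots> \<le> (\<Sum>b<OPT sz S. 1)" by (rule sum_mono) (use fits in simp)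
  finally show ?thesis by simp
qed

lemma card_le_OPT_if_card_le_1:
  assumes S: "S \<subseteq> {..<n}" and sizes: "\<forall>j<n. 0 \<le> sz j \<and> sz j \<le> 1" and "card S \<le> 1"
  shows "card S \<le> OPT sz S"
proof (cases "S = {}")
  case False
  then obtain x where "x \<in> S" by blast
  moreover obtain asg where "\<forall>i\<in>S. asg i < OPT sz S" using OPT_packing[OF S sizes] by blast
  ultimately show ?thesis using \<open>card S \<le> 1\<close> by fastforce
qed simp

lemma card_ran_le_card_dom: "finite (dom p) \<Longrightarrow> card (ran p) \<le> card (dom p)"
proof -
  assume "finite (dom p)"
  moreover have "ran p = (\<lambda>j. the (p j)) ` dom p" unfolding ran_def dom_def by force
  ultimately show ?thesis using card_image_le by simp
qed

lemma card_bad_bins_le: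
  assumes inv: "packing_inv \<alpha> sz n p cl gd g"
  shows "card {b. is_open p b \<and> \<not> gd b} \<le> g"
proof -
  have "inj_on cl {b. is_open p b \<and> \<not> gd b}" using inv unfolding packing_inv_def by blast
  then have "card {b. is_open p b \<and> \<not> gd b} = card (cl ` {b. is_open p b \<and> \<not> gd b})"
    by (simp add: card_image)
  also have "\<dots> \<le> card {..<g}"
    by (rule card_mono) (use inv in \<open>auto simp: packing_inv_def\<close>)
  finally show ?thesis by simp
qed

lemma good_bins_total_load:
  assumes inv: "packing_inv \<alpha> sz n p cl gd g" and "finite {b. is_open p b \<and> gd b}"
    and S: "dom p \<subseteq> S" "finite S" and sizes: "\<forall>j\<in>S. 0 \<le> sz j"
  shows "\<alpha> * card {b. is_open p b \<and> gd b} \<le> (\<Sum>j\<in>S. sz j)"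
proof -
  let ?G = "{b. is_open p b \<and> gd b}" and ?items = "\<lambda>b. {j. p j = Some (Bin b)}"
  have fin_items: "finite (?items b)" for b
    by (rule finite_subset[OF _ S(2)]) (use S(1) in \<open>auto simp: dom_def\<close>)
  have "\<alpha> * card ?G = (\<Sum>b\<in>?G. \<alpha>)" by simp
  also have "\<dots> \<le> (\<Sum>b\<in>?G. load sz p (Bin b))"
    by (rule sum_mono) (use inv in \<open>simp add: packing_inv_def\<close>)
  also have "\<dots> = sum sz (\<Union>b\<in>?G. ?items b)"
    unfolding load_def
    by (rule sum.UNION_disjoint[symmetric]) (use fin_items assms(2) in auto)
  also have "\<dots> \<le> sum sz S"
    by (rule sum_mono2) (use S sizes in \<open>auto simp: dom_def\<close>)
  finally show ?thesis .
qed

text \<open>The \<open>g + 1\<close> junk bins and at most \<open>g\<close> Bad bins give \<open>2 g + 1\<close>; the Good bins are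
  filled to at least \<open>\<alpha>\<close>.\<close>
lemma card_bins_le:
  assumes inv: "packing_inv \<alpha> sz n p cl gd g" and \<alpha>: "0 < \<alpha>"
    and S: "dom p \<subseteq> S" "finite S" and sizes: "\<forall>j\<in>S. 0 \<le> sz j"
  shows "real (card (ran p)) \<le> (\<Sum>j\<in>S. sz j) / \<alpha> + 2 * real g + 1"
proof -
  let ?G = "{b. is_open p b \<and> gd b}" and ?B = "{b. is_open p b \<and> \<not> gd b}"
  have fin: "finite (ran p)" using finite_ran finite_subset[OF S(1,2)] .
  have inj: "inj_on Bin X" for X by (simp add: inj_on_def)
  have "Bin ` ?G \<subseteq> ran p" "Bin ` ?B \<subseteq> ran p" unfolding is_open_def ran_def by auto
  then have "finite (Bin ` ?G)" "finite (Bin ` ?B)" using finite_subset[OF _ fin] by blast+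
  then have "finite ?G" "finite ?B" using finite_imageD[OF _ inj] by blast+
  have "ran p \<subseteq> Junk ` {..g} \<union> Bin ` ?G \<union> Bin ` ?B"
  proof
    fix l assume "l \<in> ran p"
    then obtain j where j: "p j = Some l" unfolding ran_def by blast
    show "l \<in> Junk ` {..g} \<union> Bin ` ?G \<union> Bin ` ?B"
    proof (cases l)
      case (Junk k)
      then show ?thesis using inv j unfolding packing_inv_def by auto
    next
      case (Bin b)
      then have "is_open p b" using j unfolding is_open_def by blast
      then show ?thesis using Bin by (cases "gd b") auto
    qed
  qed
  then have "card (ran p) \<le> card (Junk ` {..g} \<union> Bin ` ?G \<union> Bin ` ?B)"
    using \<open>finite ?G\<close> \<open>finite ?B\<close> by (intro card_mono) auto
  also have "\<dots> \<le> card (Junk ` {..g}) + card (Bin ` ?G) + card (Bin ` ?B)"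
    by (meson card_Un_le add_le_mono order_trans le_refl)
  also have "\<dots> \<le> (g + 1) + card ?G + card ?B"
    using card_image_le[of "{..g}" Junk] card_image[OF inj] by simp
  finally have "card (ran p) \<le> g + 1 + card ?G + card ?B" .
  moreover have "real (card ?G) \<le> (\<Sum>j\<in>S. sz j) / \<alpha>"
    using good_bins_total_load[OF inv \<open>finite ?G\<close> S sizes] \<alpha> by (simp add: field_simps)
  ultimately show ?thesis using card_bad_bins_le[OF inv] by linarith
qed

lemma guess_le_log:
  assumes "2 \<le> r" "g = 0 \<or> 2 ^ (g - 1) \<le> r"
  shows "real g \<le> 1 + log 2 (real r)"
proof (cases "g = 0")
  case True
  have "1 \<le> log 2 (real r)" using le_log2_of_power[of 1 r] assms(1) by simp
  then show ?thesis using True by simp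
next
  case False
  then have "real (g - 1) \<le> log 2 (real r)" using assms(2) le_log2_of_power by blast
  then show ?thesis using False by (simp add: of_nat_diff)
qed

lemma num_open_bound:
  assumes inv: "packing_inv \<alpha> sz n (pos \<sigma>) (cls \<sigma>) (good \<sigma>) (gk \<sigma>)" and \<alpha>: "0 < \<alpha>" "\<alpha> < 1/2"
    and dom: "dom (pos \<sigma>) \<subseteq> S" and S: "S \<subseteq> {..<n}" and sizes: "\<forall>j<n. 0 \<le> sz j \<and> sz j \<le> 1"
    and "card S \<le> r" and guess: "gk \<sigma> = 0 \<or> 2 ^ (gk \<sigma> - 1) \<le> r"
  shows "real (num_open \<sigma>) \<le> real (OPT sz S) / \<alpha> + 5 * log 2 (real r)"
proof -
  have "finite S" using S finite_subset by blast
  have "real (OPT sz S) * \<alpha> \<le> real (OPT sz S) * 1" using \<alpha> by (intro mult_left_mono) auto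
  then have OPT_le: "real (OPT sz S) \<le> real (OPT sz S) / \<alpha>" using \<alpha> by (simp add: le_divide_eq)
  have "(\<Sum>j\<in>S. sz j) / \<alpha> \<le> real (OPT sz S) / \<alpha>"
    using sum_size_le_OPT[OF S sizes] \<alpha>(1) by (simp add: divide_right_mono)
  moreover have "\<forall>j\<in>S. 0 \<le> sz j" using S sizes by auto
  ultimately have bins: "real (num_open \<sigma>) \<le> real (OPT sz S) / \<alpha> + 2 * real (gk \<sigma>) + 1"
    using card_bins_le[OF inv \<alpha>(1) dom \<open>finite S\<close>] unfolding num_open_def by linarith
  have items: "num_open \<sigma> \<le> card S"
    using card_ran_le_card_dom[OF finite_subset[OF dom \<open>finite S\<close>]] card_mono[OF \<open>finite S\<close> dom]
    unfolding num_open_def by linarith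
  show ?thesis
  proof (cases "r \<le> 1")
    case True
    \<comment> \<open>the logarithmic term vanishes (also \<open>log 2 0 = 0\<close>), so count items instead\<close>
    then have "log 2 (real r) = 0" by (auto simp: le_Suc_eq log_def)
    moreover have "card S \<le> OPT sz S"
      using card_le_OPT_if_card_le_1[OF S sizes] \<open>card S \<le> r\<close> True by simp
    ultimately show ?thesis using items OPT_le by simp
  next
    case False
    then have "real (gk \<sigma>) \<le> 1 + log 2 (real r)" "1 \<le> log 2 (real r)"
      using guess_le_log[OF _ guess] le_log2_of_power[of 1 r] by simp_all
    then show ?thesis using bins by linarith
  qed
qed

theorem lemma11:
  "\<exists>C::real. \<forall>(\<alpha>::real) n arr sz dur es ss (t::real).
     0 < \<alpha> \<and> \<alpha> < 1/2 \<and> valid_instance n arr sz dur \<and> valid_events n arr dur es \<and>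
     is_run \<alpha> sz es ss \<longrightarrow>
     real (num_open (state_at arr dur es ss t))
       \<le> real (OPT sz (present n arr dur t)) / \<alpha> + C * log 2 (real (rho n arr dur))"
proof (intro exI[of _ 5] allI impI, elim conjE)
  fix \<alpha> :: real and n arr sz dur es ss and t :: real
  assume \<alpha>: "0 < \<alpha>" "\<alpha> < 1/2" and vi: "valid_instance n arr sz dur"
    and ve: "valid_events n arr dur es" and run: "is_run \<alpha> sz es ss"
  note inv = state_at_invariant[OF vi ve run \<alpha>(2) refl, of t]
  have "present n arr dur t \<subseteq> {..<n}" unfolding present_def by auto
  moreover have "\<forall>j<n. 0 \<le> sz j \<and> sz j \<le> 1" using vi unfolding valid_instance_def by simp
  ultimately show "real (num_open (state_at arr dur es ss t))
      \<le> real (OPT sz (present n arr dur t)) / \<alpha> + 5 * log 2 (real (rho n arr dur))"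
    using num_open_bound[OF inv(1) \<alpha> inv(2)] inv(3) card_present_le_rho by blast
qed

end
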